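(* Assume the setting and algorithm described in the context, with any step-size $\alpha>0$. Let $\beta>0$ be arbitrary and $\theta:=1-\frac1m+\alpha\beta+\frac{2\alpha^2L^2}{n}$. Then for all $k\ge0$, almost surely, $$\mathbb E\big[t^{k+1}\,|\,\mathcal F^k\big]\le\theta\,t^k+\Big(2\alpha^2+\frac\alpha\beta\Big)\|\overline{\nabla\mathbf f}(x^k)\|^2+\Big(\frac{2\alpha^2L^2}{n}+\frac2m\Big)\frac1n\|x^k-Jx^k\|^2 .$$
   Context: Setting. Let $n,m,p\ge1$ be integers and $\mathcal V=\{1,\dots,n\}$. For each $i\in\mathcal V$ and $j\in\{1,\dots,m\}$, $f_{i,j}:\mathbb R^p\to\mathbb R$ is differentiable and $L$-smooth for some $L>0$, i.e. $\|\nabla f_{i,j}(x)-\nabla f_{i,j}(y)\|\le L\|x-y\|$ for all $x,y\in\mathbb R^p$. Let $f_i:=\frac1m\sum_{j=1}^m f_{i,j}$ and $F:=\frac1n\sum_{i=1}^n f_i$, and assume $F^*:=\inf_{x\in\mathbb R^p}F(x)>-\infty$. Let $\underline W=(\underline w_{ir})\in\mathbb R^{n\times n}$ be a nonnegative, primitive, doubly stochastic matrix ($\underline W\mathbf 1_n=\mathbf 1_n$, $\mathbf 1_n^\top\underline W=\mathbf 1_n^\top$), and let $\lambda\in[0,1)$ be its second largest singular value. Any expression with $\lambda$ in a denominator is read as $+\infty$ when $\lambda=0$. Algorithm GT-SAGA with step-size $\alpha>0$: fix a deterministic $\bar x^0\in\mathbb R^p$; for all $i\in\mathcal V$ set $x_i^0=\bar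 x^0$, $z_{i,j}^0=x_i^0$ for all $j$, $y_i^0=0$, $g_i^{-1}=0$. For $k=0,1,2,\dots$ and every $i\in\mathcal V$: draw $\tau_i^k$ uniformly from $\{1,\dots,m\}$; set $g_i^k=\nabla f_{i,\tau_i^k}(x_i^k)-\nabla f_{i,\tau_i^k}(z_{i,\tau_i^k}^k)+\frac1m\sum_{j=1}^m\nabla f_{i,j}(z_{i,j}^k)$; set $y_i^{k+1}=\sum_{r=1}^n\underline w_{ir}(y_r^k+g_r^k-g_r^{k-1})$; set $x_i^{k+1}=\sum_{r=1}^n\underline w_{ir}(x_r^k-\alpha y_r^{k+1})$; draw $s_i^k$ uniformly from $\{1,\dots,m\}$; set $z_{i,j}^{k+1}=x_i^k$ if $j=s_i^k$ and $z_{i,j}^{k+1}=z_{i,j}^k$ otherwise. The family $\{\tau_i^k,s_i^k: i\in\mathcal V,k\ge0\}$ is independent. Notation. $x^k,y^k,g^k\in\mathbb R^{np}$ stack the $x_i^k$, $y_i^k$, $g_i^k$; $\nabla\mathbf f(x^k)\in\mathbb R^{np}$ stacks $\nabla f_i(x_i^k)$, $i=1,\dots,n$; $W=\underline W\otimes I_p$, $J=(\frac1n\mathbf 1_n\mathbf 1_n^\top)\otimes I_p$; $\bar x^k=\frac1n\sum_i x_i^k$, $\bar g^k=\frac1n\sum_i g_i^k$, $\overline{\nabla\mathbf f}(x^k)=\frac1n\sum_i\nabla f_i(x_i^k)$. $\mathcal F^0$ is the trivial $\sigma$-algebra and $\mathcal F^k=\sigma(\{\tau_i^t,s_i^t:i\in\mathcal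 V,\ t\le k-1\})$ for $k\ge1$. $t^k:=\frac1n\sum_{i=1}^n\frac1m\sum_{j=1}^m\|\bar x^k-z_{i,j}^k\|^2$. $\|\nabla\mathbf f(x^0)\|^2:=\sum_{i=1}^n\|\nabla f_i(\bar x^0)\|^2$. Norms are Euclidean (spectral for matrices); vector and matrix inequalities are entrywise. *)

theory Defs
  imports "HOL-Analysis.Analysis" "HOL-Probability.Probability"
begin

(* Nodes are indexed 0..<n, component functions 0..<m (0-based instead of 1-based). *)

fun mat_pow :: "nat \<Rightarrow> (nat \<Rightarrow> nat \<Rightarrow> real) \<Rightarrow> nat \<Rightarrow> nat \<Rightarrow> nat \<Rightarrow> real" where
  "mat_pow n W 0 = (\<lambda>i j. if i = j then 1 else 0)"
| "mat_pow n W (Suc k) = (\<lambda>i j. \<Sum>r<n. mat_pow n W k i r * W r j)"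

definition primitive_mat :: "nat \<Rightarrow> (nat \<Rightarrow> nat \<Rightarrow> real) \<Rightarrow> bool" where
  "primitive_mat n W \<longleftrightarrow> (\<exists>k. \<forall>i<n. \<forall>j<n. mat_pow n W k i j > 0)"

definition doubly_stochastic :: "nat \<Rightarrow> (nat \<Rightarrow> nat \<Rightarrow> real) \<Rightarrow> bool" where
  "doubly_stochastic n W \<longleftrightarrow>
     (\<forall>i<n. \<forall>j<n. W i j \<ge> 0) \<and> (\<forall>i<n. (\<Sum>j<n. W i j) = 1) \<and> (\<forall>j<n. (\<Sum>i<n. W i j) = 1)"

(* One random draw per node and per iteration: the pair (tau_i^k, s_i^k). *)
type_synonym draws = "nat \<Rightarrow> nat \<times> nat"

(* State of GT-SAGA at iteration k: (x^k, y^k, z^k, g^{k-1}) *)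
type_synonym 'a gt_state = "(nat \<Rightarrow> 'a) \<times> (nat \<Rightarrow> 'a) \<times> (nat \<Rightarrow> nat \<Rightarrow> 'a) \<times> (nat \<Rightarrow> 'a)"

(* the stochastic gradient g_i^k, given the state and the draws at time k;
   Df i j is the gradient of f_{i,j} *)
definition saga_grad ::
  "nat \<Rightarrow> (nat \<Rightarrow> nat \<Rightarrow> 'a::euclidean_space \<Rightarrow> 'a) \<Rightarrow> 'a gt_state \<Rightarrow> draws \<Rightarrow> nat \<Rightarrow> 'a" where
  "saga_grad m Df st d i =
     (case st of (x, y, z, gp) \<Rightarrow>
        Df i (fst (d i)) (x i) - Df i (fst (d i)) (z i (fst (d i)))
        + (1 / real m) *\<^sub>R (\<Sum>j<m. Df i j (z i j)))"

definition gt_step ::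
  "nat \<Rightarrow> nat \<Rightarrow> (nat \<Rightarrow> nat \<Rightarrow> real) \<Rightarrow> real \<Rightarrow> (nat \<Rightarrow> nat \<Rightarrow> 'a::euclidean_space \<Rightarrow> 'a)
   \<Rightarrow> 'a gt_state \<Rightarrow> draws \<Rightarrow> 'a gt_state" where
  "gt_step n m W \<alpha> Df st d =
     (case st of (x, y, z, gp) \<Rightarrow>
       let g = saga_grad m Df st d;
           y' = (\<lambda>i. \<Sum>r<n. W i r *\<^sub>R (y r + g r - gp r));
           x' = (\<lambda>i. \<Sum>r<n. W i r *\<^sub>R (x r - \<alpha> *\<^sub>R y' r));
           z' = (\<lambda>i j. if j = snd (d i) then x i else z i j)
       in (x', y', z', g))"

primrec gt_saga ::
  "nat \<Rightarrow> nat \<Rightarrow> (nat \<Rightarrow> nat \<Rightarrow> real) \<Rightarrow> real \<Rightarrow> (nat \<Rightarrow> nat \<Rightarrow> 'a::euclidean_space \<Rightarrow> 'a) \<Rightarrow> 'a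
   \<Rightarrow> (nat \<Rightarrow> draws) \<Rightarrow> nat \<Rightarrow> 'a gt_state" where
  "gt_saga n m W \<alpha> Df x0 \<omega> 0 = (\<lambda>i. x0, \<lambda>i. 0, \<lambda>i j. x0, \<lambda>i. 0)"
| "gt_saga n m W \<alpha> Df x0 \<omega> (Suc k) = gt_step n m W \<alpha> Df (gt_saga n m W \<alpha> Df x0 \<omega> k) (\<omega> k)"

definition st_x :: "'a gt_state \<Rightarrow> nat \<Rightarrow> 'a" where "st_x st = fst st"
definition st_z :: "'a gt_state \<Rightarrow> nat \<Rightarrow> nat \<Rightarrow> 'a" where "st_z st = fst (snd (snd st))"

definition avg :: "nat \<Rightarrow> (nat \<Rightarrow> 'a::real_vector) \<Rightarrow> 'a" where
  "avg n v = (1 / real n) *\<^sub>R (\<Sum>i<n. v i)"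

definition t_gap :: "nat \<Rightarrow> nat \<Rightarrow> 'a::euclidean_space gt_state \<Rightarrow> real" where
  "t_gap n m st = (1 / real n) * (\<Sum>i<n. (1 / real m) *
       (\<Sum>j<m. (norm (avg n (st_x st) - st_z st i j))\<^sup>2))"

definition consensus_err :: "nat \<Rightarrow> 'a::euclidean_space gt_state \<Rightarrow> real" where
  "consensus_err n st = (\<Sum>i<n. (norm (st_x st i - avg n (st_x st)))\<^sup>2)"

definition avg_grad_sq :: "nat \<Rightarrow> nat \<Rightarrow> (nat \<Rightarrow> nat \<Rightarrow> 'a::euclidean_space \<Rightarrow> 'a) \<Rightarrow> 'a gt_state \<Rightarrow> real" where
  "avg_grad_sq n m Df st =
     (norm (avg n (\<lambda>i. (1 / real m) *\<^sub>R (\<Sum>j<m. Df i j (st_x st i)))))\<^sup>2"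

definition draw_space :: "nat \<Rightarrow> nat \<Rightarrow> draws measure" where
  "draw_space n m = PiM {..<n} (\<lambda>_. measure_pmf (pair_pmf (pmf_of_set {..<m}) (pmf_of_set {..<m})))"

definition run_space :: "nat \<Rightarrow> nat \<Rightarrow> (nat \<Rightarrow> draws) measure" where
  "run_space n m = PiM UNIV (\<lambda>_::nat. draw_space n m)"

definition filt :: "nat \<Rightarrow> nat \<Rightarrow> nat \<Rightarrow> (nat \<Rightarrow> draws) measure" where
  "filt n m k = vimage_algebra (space (run_space n m)) (\<lambda>\<omega>. restrict \<omega> {..<k})
                   (PiM {..<k} (\<lambda>_. draw_space n m))"

end

theory Submission
  imports Defs
begin

text \<open>
Given the draws of rounds 0, ..., k-1, the state of GT-SAGA at round k is fixed, and the draws of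
round k are independent of them; so the conditional expectation of the next gap is the plain
expectation over one round of draws, taken at the current state. Write the new network average as
x - alpha (g + N), where g averages the exact local gradients and N averages the SAGA errors
xi_i(tau_i), which have mean zero. Each memory point z_ij is overwritten by x_i with probability 1/m,
independently of N, so the expected gap splits exactly into a resampling part plus the noise
variance (alpha^2/n) avg_i E|xi_i|^2. In the resampling part the cross term
2 alpha (1 - 1/m) <w, g>, with w the average of the x - z_ij, is absorbed by Young's inequality
with weight beta, using |w|^2 <= t^k; L-smoothness bounds the noise variance by
2 L^2 (consensus error / n + t^k).
\<close>

section \<open>Conditioning on the past of an i.i.d. sequence\<close>

text \<open>Every function out of such a space is measurable, which disposes of all measurability
  side conditions below: the spaces of draws are of this kind.\<close>

definition countable_discrete :: "'a measure \<Rightarrow> bool" where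
  "countable_discrete N \<longleftrightarrow> countable (space N) \<and> (\<forall>x\<in>space N. {x} \<in> sets N)"

lemma measurable_countable_discrete:
  assumes "countable_discrete N" "f \<in> space N \<rightarrow> space M"
  shows "f \<in> measurable N M"
  unfolding measurable_def
proof safe
  fix A assume "A \<in> sets M"
  have "f -` A \<inter> space N = (\<Union>x\<in>f -` A \<inter> space N. {x})" by auto
  also have "\<dots> \<in> sets N"
    using assms(1) unfolding countable_discrete_def
    by (intro sets.countable_UN') (auto intro: countable_subset)
  finally show "f -` A \<inter> space N \<in> sets N" .
qed (use assms(2) in auto)

lemma borel_measurable_countable_discrete: "countable_discrete N \<Longrightarrow> f \<in> borel_measurable N"
  by (rule measurable_countable_discrete) auto

lemma countable_discrete_measure_pmf: "countable_discrete (measure_pmf (p :: 'a::countable pmf))"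
  unfolding countable_discrete_def by simp

lemma countable_discrete_PiM:
  assumes "finite J" "\<And>i. i \<in> J \<Longrightarrow> countable_discrete (M i)"
  shows "countable_discrete (PiM J M)"
  unfolding countable_discrete_def
proof safe
  show "countable (space (PiM J M))" unfolding space_PiM
    using assms unfolding countable_discrete_def by (intro countable_PiE) auto
next
  fix x assume x: "x \<in> space (PiM J M)"
  then have xe: "x \<in> extensional J" and xs: "\<And>i. i \<in> J \<Longrightarrow> x i \<in> space (M i)"
    unfolding space_PiM by (auto simp: PiE_def)
  have "{x} = PiE J (\<lambda>i. {x i})" using PiE_singleton[OF xe] by simp
  also have "\<dots> \<in> sets (PiM J M)"
    using assms xs unfolding countable_discrete_def by (intro sets_PiM_I_finite) auto
  finally show "{x} \<in> sets (PiM J M)" .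
qed

lemma restrict_fun_upd_extensional:
  "u \<in> extensional A \<Longrightarrow> k \<notin> A \<Longrightarrow> restrict (u(k := y)) A = u"
  by (rule ext) (auto simp: extensional_def)

lemma nn_integral_PiM_restrict_finite:
  fixes G :: "('i \<Rightarrow> 'b) \<Rightarrow> ennreal"
  assumes D: "prob_space D" "countable_discrete D" and J: "finite J"
  shows "(\<integral>\<^sup>+ \<omega>. G (restrict \<omega> J) \<partial>PiM UNIV (\<lambda>_. D)) = (\<integral>\<^sup>+ v. G v \<partial>PiM J (\<lambda>_. D))"
proof -
  interpret product_prob_space "\<lambda>_::'i. D" UNIV
    using D(1) by (rule product_prob_spaceI)
  have "G \<in> borel_measurable (PiM J (\<lambda>_. D))"
    using D(2) J by (intro borel_measurable_countable_discrete countable_discrete_PiM)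
  then have "(\<integral>\<^sup>+ \<omega>. G (restrict \<omega> J) \<partial>PiM UNIV (\<lambda>_. D))
      = (\<integral>\<^sup>+ v. G v \<partial>distr (PiM UNIV (\<lambda>_. D)) (PiM J (\<lambda>_. D)) (\<lambda>\<omega>. restrict \<omega> J))"
    by (intro nn_integral_distr[symmetric] measurable_restrict_subset) simp_all
  also have "\<dots> = (\<integral>\<^sup>+ v. G v \<partial>PiM J (\<lambda>_. D))"
    using distr_PiM_restrict_finite[OF J subset_UNIV] by simp
  finally show ?thesis .
qed

lemma nn_integral_PiM_next_coordinate:
  fixes \<Phi> :: "(nat \<Rightarrow> 'b) \<Rightarrow> 'b \<Rightarrow> ennreal"
  assumes D: "prob_space D" "countable_discrete D"
  shows "(\<integral>\<^sup>+ \<omega>. \<Phi> (restrict \<omega> {..<k}) (\<omega> k) \<partial>PiM UNIV (\<lambda>_. D))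
       = (\<integral>\<^sup>+ \<omega>. (\<integral>\<^sup>+ d. \<Phi> (restrict \<omega> {..<k}) d \<partial>D) \<partial>PiM UNIV (\<lambda>_. D))"
proof -
  interpret product_prob_space "\<lambda>_::nat. D" UNIV
    using D(1) by (rule product_prob_spaceI)
  define \<Psi> where "\<Psi> v = \<Phi> (restrict v {..<k}) (v k)" for v
  have "(\<integral>\<^sup>+ \<omega>. \<Phi> (restrict \<omega> {..<k}) (\<omega> k) \<partial>PiM UNIV (\<lambda>_. D))
      = (\<integral>\<^sup>+ \<omega>. \<Psi> (restrict \<omega> {..<Suc k}) \<partial>PiM UNIV (\<lambda>_. D))"
    by (simp add: \<Psi>_def Int_absorb1)
  also have "\<dots> = (\<integral>\<^sup>+ v. \<Psi> v \<partial>PiM {..<Suc k} (\<lambda>_. D))"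
    using D by (rule nn_integral_PiM_restrict_finite) simp
  also have "\<dots> = (\<integral>\<^sup>+ u. (\<integral>\<^sup>+ d. \<Psi> (u(k := d)) \<partial>D) \<partial>PiM {..<k} (\<lambda>_. D))"
    unfolding lessThan_Suc using D(2)
    by (intro product_nn_integral_insert borel_measurable_countable_discrete countable_discrete_PiM) auto
  also have "\<dots> = (\<integral>\<^sup>+ u. (\<integral>\<^sup>+ d. \<Phi> u d \<partial>D) \<partial>PiM {..<k} (\<lambda>_. D))"
    by (intro nn_integral_cong)
      (simp add: \<Psi>_def restrict_fun_upd_extensional extensional_restrict space_PiM PiE_def)
  also have "\<dots> = (\<integral>\<^sup>+ \<omega>. (\<integral>\<^sup>+ d. \<Phi> (restrict \<omega> {..<k}) d \<partial>D) \<partial>PiM UNIV (\<lambda>_. D))"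
    using D by (rule nn_integral_PiM_restrict_finite[symmetric]) simp
  finally show ?thesis .
qed

lemma nn_cond_exp_PiM_next_coordinate:
  fixes D :: "'b measure" and \<Phi> :: "(nat \<Rightarrow> 'b) \<Rightarrow> 'b \<Rightarrow> ennreal" and k :: nat
  assumes D: "prob_space D" "countable_discrete D"
  defines "M \<equiv> PiM UNIV (\<lambda>_::nat. D)"
    and "F \<equiv> vimage_algebra (space (PiM UNIV (\<lambda>_::nat. D))) (\<lambda>\<omega>. restrict \<omega> {..<k})
                   (PiM {..<k} (\<lambda>_. D))"
  shows "AE \<omega> in M. nn_cond_exp M F (\<lambda>\<omega>. \<Phi> (restrict \<omega> {..<k}) (\<omega> k)) \<omega>
                   = (\<integral>\<^sup>+ d. \<Phi> (restrict \<omega> {..<k}) d \<partial>D)"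
proof -
  interpret M: prob_space M
    unfolding M_def using D(1) by (rule prob_space_PiM)
  have discrete: "countable_discrete (PiM J (\<lambda>_. D))" if "finite J" for J :: "nat set"
    using D(2) that by (auto intro: countable_discrete_PiM)
  have restrict_meas: "(\<lambda>\<omega>. restrict \<omega> J) \<in> measurable M (PiM J (\<lambda>_. D))" for J
    unfolding M_def by (rule measurable_restrict_subset) simp
  have restrict_fun: "(\<lambda>\<omega>. restrict \<omega> {..<k}) \<in> space M \<rightarrow> space (PiM {..<k} (\<lambda>_. D))"
    using measurable_space[OF restrict_meas] by auto
  have F_eq: "F = vimage_algebra (space M) (\<lambda>\<omega>. restrict \<omega> {..<k}) (PiM {..<k} (\<lambda>_. D))"
    unfolding F_def M_def ..
  have sets_F: "sets F = {(\<lambda>\<omega>. restrict \<omega> {..<k}) -` B \<inter> space M | B. B \<in> sets (PiM {..<k} (\<lambda>_. D))}"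
    unfolding F_eq by (rule sets_vimage_algebra2[OF restrict_fun])
  interpret F: finite_measure_subalgebra M F
  proof unfold_locales
    have "space F = space M" unfolding F_eq by simp
    moreover have "sets F \<subseteq> sets M"
      unfolding sets_F using measurable_sets[OF restrict_meas] by auto
    ultimately show "subalgebra M F" unfolding subalgebra_def ..
  qed
  have X_meas: "(\<lambda>\<omega>. \<Phi> (restrict \<omega> {..<k}) (\<omega> k)) \<in> borel_measurable M"
  proof -
    have "(\<lambda>\<omega>. (\<lambda>v. \<Phi> (restrict v {..<k}) (v k)) (restrict \<omega> {..<Suc k})) \<in> borel_measurable M"
      by (rule measurable_compose[OF restrict_meas borel_measurable_countable_discrete[OF discrete]]) simp
    then show ?thesis by (simp add: Int_absorb1)
  qed
  have H_meas: "(\<lambda>\<omega>. \<integral>\<^sup>+ d. \<Phi> (restrict \<omega> {..<k}) d \<partial>D) \<in> borel_measurable F"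
    unfolding F_eq
    by (rule measurable_compose[OF measurable_vimage_algebra1[OF restrict_fun]
          borel_measurable_countable_discrete[OF discrete]]) simp
  have "(\<integral>\<^sup>+ \<omega> \<in> A. \<Phi> (restrict \<omega> {..<k}) (\<omega> k) \<partial>M) = (\<integral>\<^sup>+ \<omega> \<in> A. (\<integral>\<^sup>+ d. \<Phi> (restrict \<omega> {..<k}) d \<partial>D) \<partial>M)"
    if "A \<in> sets F" for A
  proof -
    obtain B where A: "A = (\<lambda>\<omega>. restrict \<omega> {..<k}) -` B \<inter> space M"
      using \<open>A \<in> sets F\<close> unfolding sets_F by blast
    have ind: "indicator A \<omega> = indicator B (restrict \<omega> {..<k})" if "\<omega> \<in> space M" for \<omega>
      using that by (simp add: A indicator_def)
    have "(\<integral>\<^sup>+ \<omega> \<in> A. \<Phi> (restrict \<omega> {..<k}) (\<omega> k) \<partial>M)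
        = (\<integral>\<^sup>+ \<omega>. \<Phi> (restrict \<omega> {..<k}) (\<omega> k) * indicator B (restrict \<omega> {..<k}) \<partial>M)"
      by (intro nn_integral_cong) (simp add: ind)
    also have "\<dots> = (\<integral>\<^sup>+ \<omega>. (\<integral>\<^sup>+ d. \<Phi> (restrict \<omega> {..<k}) d \<partial>D) * indicator B (restrict \<omega> {..<k}) \<partial>M)"
      using nn_integral_PiM_next_coordinate[OF D, of "\<lambda>u d. \<Phi> u d * indicator B u" k]
      by (simp add: M_def nn_integral_multc[OF borel_measurable_countable_discrete[OF D(2)]])
    also have "\<dots> = (\<integral>\<^sup>+ \<omega> \<in> A. (\<integral>\<^sup>+ d. \<Phi> (restrict \<omega> {..<k}) d \<partial>D) \<partial>M)"
      by (intro nn_integral_cong) (simp add: ind)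
    finally show ?thesis .
  qed
  from F.nn_cond_exp_charact[OF this X_meas H_meas]
  show ?thesis by auto
qed

lemma real_cond_exp_PiM_next_coordinate:
  fixes D :: "'b measure" and \<phi> :: "(nat \<Rightarrow> 'b) \<Rightarrow> 'b \<Rightarrow> real" and k :: nat
  assumes D: "prob_space D" "countable_discrete D" and nonneg: "\<And>u d. 0 \<le> \<phi> u d"
  defines "M \<equiv> PiM UNIV (\<lambda>_::nat. D)"
    and "F \<equiv> vimage_algebra (space (PiM UNIV (\<lambda>_::nat. D))) (\<lambda>\<omega>. restrict \<omega> {..<k})
                   (PiM {..<k} (\<lambda>_. D))"
  shows "AE \<omega> in M. real_cond_exp M F (\<lambda>\<omega>. \<phi> (restrict \<omega> {..<k}) (\<omega> k)) \<omega>
                   = enn2real (\<integral>\<^sup>+ d. ennreal (\<phi> (restrict \<omega> {..<k}) d) \<partial>D)"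
proof -
  have "AE \<omega> in M. nn_cond_exp M F (\<lambda>\<omega>. ennreal (- \<phi> (restrict \<omega> {..<k}) (\<omega> k))) \<omega>
                   = (\<integral>\<^sup>+ d. ennreal (- \<phi> (restrict \<omega> {..<k}) d) \<partial>D)"
    unfolding M_def F_def by (rule nn_cond_exp_PiM_next_coordinate[OF D])
  moreover have "AE \<omega> in M. nn_cond_exp M F (\<lambda>\<omega>. ennreal (\<phi> (restrict \<omega> {..<k}) (\<omega> k))) \<omega>
                   = (\<integral>\<^sup>+ d. ennreal (\<phi> (restrict \<omega> {..<k}) d) \<partial>D)"
    unfolding M_def F_def by (rule nn_cond_exp_PiM_next_coordinate[OF D])
  ultimately show ?thesis
    by eventually_elim (simp add: real_cond_exp_def ennreal_neg nonneg)
qed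

lemma avg_add: "avg n (\<lambda>i. u i + v i) = avg n u + avg n v"
  unfolding avg_def by (simp add: sum.distrib scaleR_add_right)

lemma avg_diff: "avg n (\<lambda>i. u i - v i) = avg n u - avg n v"
  unfolding avg_def by (simp add: sum_subtractf scaleR_diff_right)

lemma avg_scale: "avg n (\<lambda>i. c *\<^sub>R u i) = c *\<^sub>R avg n u"
  unfolding avg_def by (simp add: scaleR_sum_right)

lemma avg_mult: "avg n (\<lambda>i. c * f i) = c * avg n (f :: nat \<Rightarrow> real)"
  using avg_scale[of n c f] by simp

lemma avg_zero [simp]: "avg n (\<lambda>_. 0) = 0"
  unfolding avg_def by simp

lemma avg_const: "n \<ge> 1 \<Longrightarrow> avg n (\<lambda>_. c) = c"
  unfolding avg_def by (simp add: sum_constant_scaleR)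

lemma avg_inner_left: "avg n (\<lambda>i. inner (v i) u) = inner (avg n v) u"
  unfolding avg_def by (simp add: inner_sum_left)

lemma avg_inner_right: "avg n (\<lambda>i. inner u (v i)) = inner u (avg n v)"
  unfolding avg_def by (simp add: inner_sum_right)

lemma avg_mono: "(\<And>i. i < n \<Longrightarrow> f i \<le> g i) \<Longrightarrow> avg n f \<le> avg n (g :: nat \<Rightarrow> real)"
  unfolding avg_def by (auto intro!: divide_right_mono sum_mono)

lemma avg_nonneg: "(\<And>i. i < n \<Longrightarrow> 0 \<le> f i) \<Longrightarrow> 0 \<le> avg n (f :: nat \<Rightarrow> real)"
  using avg_mono[of n "\<lambda>_. 0" f] by (simp add: avg_def)

lemma avg_centered: "n \<ge> 1 \<Longrightarrow> avg n (\<lambda>i. avg n v - v i) = 0"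
  by (simp add: avg_diff avg_const)

lemma avg_if_eq:
  fixes X Z :: real
  assumes "j < m"
  shows "avg m (\<lambda>b. if j = b then X else Z) = X / real m + (1 - 1 / real m) * Z"
proof -
  have "(\<Sum>b<m. if j = b then X else Z) = (\<Sum>b<m. Z + (if j = b then X - Z else 0))"
    by (rule sum.cong) auto
  also have "\<dots> = real m * Z + (X - Z)"
    using assms by (simp add: sum.distrib)
  finally show ?thesis
    using assms by (simp add: avg_def field_simps)
qed

lemma avg_if_eq_zero:
  fixes X :: real
  assumes "i < n"
  shows "avg n (\<lambda>i'. if i = i' then X else 0) = X / real n"
  using assms by (simp add: avg_def)

lemma avg_cong_lessThan: "(\<And>i. i < n \<Longrightarrow> u i = v i) \<Longrightarrow> avg n u = avg n v"
  unfolding avg_def using sum.cong[of "{..<n}" "{..<n}" u v] by simp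

lemma avg_sq_norm_diff:
  fixes p :: "nat \<Rightarrow> 'a::real_inner"
  assumes "n \<ge> 1"
  shows "avg n (\<lambda>i. (norm (p i - u))\<^sup>2) = avg n (\<lambda>i. (norm (p i))\<^sup>2) - 2 * inner (avg n p) u + (norm u)\<^sup>2"
proof -
  have "(norm (p i - u))\<^sup>2 = (norm (p i))\<^sup>2 - 2 * inner (p i) u + (norm u)\<^sup>2" for i
    by (simp add: power2_norm_eq_inner inner_diff_left inner_diff_right inner_commute)
  then show ?thesis
    using assms by (simp add: avg_add avg_diff avg_mult avg_const avg_inner_left)
qed

lemma avg_sq_norm_diff_avg:
  fixes v :: "nat \<Rightarrow> 'a::real_inner"
  assumes "n \<ge> 1"
  shows "avg n (\<lambda>i. (norm (v i - avg n v))\<^sup>2) = avg n (\<lambda>i. (norm (v i))\<^sup>2) - (norm (avg n v))\<^sup>2"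
  using avg_sq_norm_diff[OF assms, of v "avg n v"] by (simp add: power2_norm_eq_inner)

lemma norm_avg_sq_le:
  fixes v :: "nat \<Rightarrow> 'a::real_inner"
  assumes "n \<ge> 1"
  shows "(norm (avg n v))\<^sup>2 \<le> avg n (\<lambda>i. (norm (v i))\<^sup>2)"
  using avg_sq_norm_diff_avg[OF assms, of v] avg_nonneg[of n "\<lambda>i. (norm (v i - avg n v))\<^sup>2"] by simp

lemma avg_sq_norm_centered_le:
  fixes v :: "nat \<Rightarrow> 'a::real_inner"
  assumes "n \<ge> 1"
  shows "avg n (\<lambda>i. (norm (v i - avg n v))\<^sup>2) \<le> avg n (\<lambda>i. (norm (v i))\<^sup>2)"
  using avg_sq_norm_diff_avg[OF assms, of v] by simp

lemma avg_doubly_stochastic_mix: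
  assumes "doubly_stochastic n W"
  shows "avg n (\<lambda>i. \<Sum>r<n. W i r *\<^sub>R v r) = avg n v"
proof -
  have "(\<Sum>i<n. \<Sum>r<n. W i r *\<^sub>R v r) = (\<Sum>r<n. (\<Sum>i<n. W i r) *\<^sub>R v r)"
    by (subst sum.swap) (simp add: scaleR_sum_left)
  also have "\<dots> = (\<Sum>r<n. v r)"
    using assms unfolding doubly_stochastic_def by simp
  finally show ?thesis unfolding avg_def by simp
qed

lemma norm_diff_scaleR_sq:
  fixes u v :: "'a::real_inner"
  shows "(norm (u - c *\<^sub>R v))\<^sup>2 = (norm u)\<^sup>2 - 2 * c * inner u v + c\<^sup>2 * (norm v)\<^sup>2"
  using dot_norm_neg[of u "c *\<^sub>R v"] by (simp add: power_mult_distrib)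

lemma norm_sq_add_le:
  fixes u v :: "'a::real_inner"
  shows "(norm (u + v))\<^sup>2 \<le> 2 * (norm u)\<^sup>2 + 2 * (norm v)\<^sup>2"
proof -
  have "(norm (u + v))\<^sup>2 + (norm (u - v))\<^sup>2 = 2 * (norm u)\<^sup>2 + 2 * (norm v)\<^sup>2"
    by (simp add: power2_norm_eq_inner inner_diff_left inner_diff_right inner_add_left
        inner_add_right inner_commute)
  then show ?thesis
    using zero_le_power2[of "norm (u - v)"] by linarith
qed

lemma two_mult_le_weighted_squares:
  fixes p q \<beta> :: real
  assumes "\<beta> > 0"
  shows "2 * p * q \<le> \<beta> * p\<^sup>2 + q\<^sup>2 / \<beta>"
proof -
  have "0 \<le> \<beta> * (p - q / \<beta>)\<^sup>2" using assms by simp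
  also have "\<beta> * (p - q / \<beta>)\<^sup>2 = \<beta> * p\<^sup>2 - 2 * p * q + q\<^sup>2 / \<beta>"
    using assms by (simp add: power2_eq_square field_simps)
  finally show ?thesis by simp
qed

section \<open>One round of draws\<close>

definition node_draws_pmf :: "nat \<Rightarrow> (nat \<times> nat) pmf" where
  "node_draws_pmf m = pair_pmf (pmf_of_set {..<m}) (pmf_of_set {..<m})"

text \<open>The pmf version of draw_space: the default value undefined outside {..<n} matches the
  extensional functions of PiM.\<close>

definition draws_pmf :: "nat \<Rightarrow> nat \<Rightarrow> draws pmf" where
  "draws_pmf n m = Pi_pmf {..<n} undefined (\<lambda>_. node_draws_pmf m)"

lemma draw_space_eq: "draw_space n m = PiM {..<n} (\<lambda>_. measure_pmf (node_draws_pmf m))"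
  unfolding draw_space_def node_draws_pmf_def ..

lemma prob_space_draw_space: "prob_space (draw_space n m)"
  unfolding draw_space_eq by (intro prob_space_PiM prob_space_measure_pmf)

lemma countable_discrete_draw_space: "countable_discrete (draw_space n m)"
  unfolding draw_space_eq by (intro countable_discrete_PiM countable_discrete_measure_pmf) auto

lemma draw_space_eq_distr_draws_pmf:
  "draw_space n m = distr (measure_pmf (draws_pmf n m)) (draw_space n m) (\<lambda>d. restrict d {..<n})"
proof -
  interpret product_prob_space "\<lambda>_. measure_pmf (node_draws_pmf m)"
    by (intro product_prob_spaceI prob_space_measure_pmf)
  show ?thesis unfolding draw_space_eq
  proof (rule PiM_eqI[symmetric])
    fix A assume A: "\<And>i. i \<in> {..<n} \<Longrightarrow> A i \<in> sets (measure_pmf (node_draws_pmf m))"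
    have "PiE {..<n} A \<in> sets (PiM {..<n} (\<lambda>_. measure_pmf (node_draws_pmf m)))"
      using A by (intro sets_PiM_I_finite) auto
    then have "emeasure (distr (measure_pmf (draws_pmf n m)) (PiM {..<n} (\<lambda>_. measure_pmf (node_draws_pmf m)))
          (\<lambda>d. restrict d {..<n})) (PiE {..<n} A)
       = emeasure (measure_pmf (draws_pmf n m)) ((\<lambda>d. restrict d {..<n}) -` PiE {..<n} A)"
      by (subst emeasure_distr) (auto simp: space_PiM)
    also have "\<dots> = emeasure (measure_pmf (draws_pmf n m)) (PiE_dflt {..<n} undefined A)"
      unfolding draws_pmf_def
      by (intro emeasure_eq_AE AE_pmfI) (auto simp: PiE_dflt_def set_Pi_pmf)
    also have "\<dots> = (\<Prod>i<n. emeasure (measure_pmf (node_draws_pmf m)) (A i))"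
      unfolding draws_pmf_def
      by (simp add: measure_pmf.emeasure_eq_measure measure_Pi_pmf_PiE_dflt prod_ennreal)
    finally show "emeasure (distr (measure_pmf (draws_pmf n m))
          (PiM {..<n} (\<lambda>_. measure_pmf (node_draws_pmf m))) (\<lambda>d. restrict d {..<n})) (PiE {..<n} A)
       = (\<Prod>i\<in>{..<n}. emeasure (measure_pmf (node_draws_pmf m)) (A i))" by simp
  qed simp_all
qed

lemma finite_set_draws_pmf: "m \<ge> 1 \<Longrightarrow> finite (set_pmf (draws_pmf n m))"
  by (auto simp: draws_pmf_def node_draws_pmf_def set_Pi_pmf finite_PiE_dflt lessThan_empty_iff)

lemma integrable_draws_pmf: "m \<ge> 1 \<Longrightarrow> integrable (measure_pmf (draws_pmf n m)) (f :: draws \<Rightarrow> real)"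
  by (rule integrable_measure_pmf_finite[OF finite_set_draws_pmf])

lemma nn_integral_draw_space:
  fixes f :: "draws \<Rightarrow> real"
  assumes m: "m \<ge> 1" and nonneg: "\<And>d. 0 \<le> f d"
  shows "(\<integral>\<^sup>+ d. ennreal (f d) \<partial>draw_space n m) = ennreal (measure_pmf.expectation (draws_pmf n m) f)"
proof -
  have "(\<integral>\<^sup>+ d. ennreal (f d) \<partial>draw_space n m)
      = (\<integral>\<^sup>+ d. ennreal (f (restrict d {..<n})) \<partial>measure_pmf (draws_pmf n m))"
    by (subst draw_space_eq_distr_draws_pmf, rule nn_integral_distr)
      (auto intro!: measurable_countable_discrete borel_measurable_countable_discrete
        countable_discrete_PiM countable_discrete_measure_pmf simp: space_PiM draw_space_eq)
  also have "\<dots> = (\<integral>\<^sup>+ d. ennreal (f d) \<partial>measure_pmf (draws_pmf n m))"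
  proof (intro nn_integral_cong_AE AE_pmfI)
    fix d assume "d \<in> set_pmf (draws_pmf n m)"
    then have "restrict d {..<n} = d"
      by (auto simp: draws_pmf_def set_Pi_pmf PiE_dflt_def restrict_def fun_eq_iff)
    then show "ennreal (f (restrict d {..<n})) = ennreal (f d)" by simp
  qed
  also have "\<dots> = ennreal (measure_pmf.expectation (draws_pmf n m) f)"
    using nonneg by (intro nn_integral_eq_integral integrable_draws_pmf m) simp_all
  finally show ?thesis .
qed

lemma map_Pi_pmf_two_components:
  assumes "finite I" "i \<in> I" "i' \<in> I" "i \<noteq> i'"
  shows "map_pmf (\<lambda>d. (d i, d i')) (Pi_pmf I dflt p) = pair_pmf (p i) (p i')"
proof -
  have "Pi_pmf {i, i'} dflt p = map_pmf (\<lambda>f x. if x \<in> {i, i'} then f x else dflt) (Pi_pmf I dflt p)"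
    using assms by (intro Pi_pmf_subset) auto
  then have "map_pmf (\<lambda>d. (d i, d i')) (Pi_pmf I dflt p)
      = map_pmf (\<lambda>d. (d i, d i')) (Pi_pmf {i, i'} dflt p)"
    by (simp add: pmf.map_comp o_def)
  also have "Pi_pmf {i, i'} dflt p = map_pmf (\<lambda>(y, f). f(i := y)) (pair_pmf (p i) (Pi_pmf {i'} dflt p))"
    using assms by (intro Pi_pmf_insert) auto
  also have "map_pmf (\<lambda>d. (d i, d i')) \<dots>
      = map_pmf (\<lambda>(a, b). (id a, b i')) (pair_pmf (p i) (Pi_pmf {i'} dflt p))"
    unfolding pmf.map_comp o_def using assms by (intro pmf.map_cong) auto
  also have "\<dots> = pair_pmf (p i) (p i')"
    unfolding map_pair using Pi_pmf_component[of "{i'}" i' dflt p] by simp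
  finally show ?thesis .
qed

lemma map_draws_pmf_component: "i < n \<Longrightarrow> map_pmf (\<lambda>d. d i) (draws_pmf n m) = node_draws_pmf m"
  unfolding draws_pmf_def by (subst Pi_pmf_component) auto

lemma map_draws_pmf_fst: "i < n \<Longrightarrow> map_pmf (\<lambda>d. fst (d i)) (draws_pmf n m) = pmf_of_set {..<m}"
  using pmf.map_comp[of fst "\<lambda>d. d i" "draws_pmf n m"]
  by (simp add: o_def map_draws_pmf_component node_draws_pmf_def map_fst_pair_pmf)

lemma map_draws_pmf_snd: "i < n \<Longrightarrow> map_pmf (\<lambda>d. snd (d i)) (draws_pmf n m) = pmf_of_set {..<m}"
  using pmf.map_comp[of snd "\<lambda>d. d i" "draws_pmf n m"]
  by (simp add: o_def map_draws_pmf_component node_draws_pmf_def map_snd_pair_pmf)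

lemma map_draws_pmf_fst_fst:
  assumes "i < n" "i' < n" "i \<noteq> i'"
  shows "map_pmf (\<lambda>d. (fst (d i), fst (d i'))) (draws_pmf n m)
       = pair_pmf (pmf_of_set {..<m}) (pmf_of_set {..<m})"
  using arg_cong[OF map_Pi_pmf_two_components[of "{..<n}" i i' undefined "\<lambda>_. node_draws_pmf m"],
      of "map_pmf (\<lambda>(a, b). (fst a, fst b))"] assms
  by (simp add: draws_pmf_def pmf.map_comp o_def case_prod_unfold map_pair[unfolded case_prod_unfold]
      node_draws_pmf_def map_fst_pair_pmf)

text \<open>No hypothesis i \<noteq> i' is needed: tau_i and s_i are drawn independently as well.\<close>

lemma map_draws_pmf_fst_snd:
  assumes "i < n" "i' < n"
  shows "map_pmf (\<lambda>d. (fst (d i'), snd (d i))) (draws_pmf n m)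
       = pair_pmf (pmf_of_set {..<m}) (pmf_of_set {..<m})"
proof (cases "i = i'")
  case True
  then show ?thesis
    using pmf.map_comp[of "\<lambda>q. (fst q, snd q)" "\<lambda>d. d i" "draws_pmf n m"] assms
    by (simp add: o_def map_draws_pmf_component node_draws_pmf_def)
next
  case False
  then show ?thesis
    using arg_cong[OF map_Pi_pmf_two_components[of "{..<n}" i' i undefined "\<lambda>_. node_draws_pmf m"],
      of "map_pmf (\<lambda>(a, b). (fst a, snd b))"] assms
    by (simp add: draws_pmf_def pmf.map_comp o_def case_prod_unfold map_pair[unfolded case_prod_unfold]
        node_draws_pmf_def map_fst_pair_pmf map_snd_pair_pmf)
qed

lemma pair_pmf_of_set:
  assumes "finite A" "A \<noteq> {}" "finite B" "B \<noteq> {}"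
  shows "pair_pmf (pmf_of_set A) (pmf_of_set B) = pmf_of_set (A \<times> B)"
proof (rule pmf_eqI)
  fix q :: "'a \<times> 'b"
  show "pmf (pair_pmf (pmf_of_set A) (pmf_of_set B)) q = pmf (pmf_of_set (A \<times> B)) q"
    using assms by (cases q) (simp add: pmf_pair card_cartesian_product indicator_def)
qed

lemma expectation_uniform:
  fixes f :: "nat \<Rightarrow> real"
  assumes "m \<ge> 1"
  shows "measure_pmf.expectation (pmf_of_set {..<m}) f = avg m f"
  using assms by (simp add: integral_pmf_of_set avg_def lessThan_empty_iff divide_inverse mult.commute)

lemma expectation_uniform_pair:
  fixes h :: "nat \<Rightarrow> nat \<Rightarrow> real"
  assumes "m \<ge> 1"
  shows "measure_pmf.expectation (pair_pmf (pmf_of_set {..<m}) (pmf_of_set {..<m})) (\<lambda>q. h (fst q) (snd q))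
       = avg m (\<lambda>u. avg m (\<lambda>v. h u v))"
proof -
  have "{..<m} \<noteq> {}" using assms by (simp add: lessThan_empty_iff)
  then have "measure_pmf.expectation (pair_pmf (pmf_of_set {..<m}) (pmf_of_set {..<m})) (\<lambda>q. h (fst q) (snd q))
      = (\<Sum>u<m. \<Sum>v<m. h u v) / (real m * real m)"
    by (simp add: pair_pmf_of_set integral_pmf_of_set card_cartesian_product sum.cartesian_product
        case_prod_unfold)
  then show ?thesis
    by (simp add: avg_def sum_divide_distrib)
qed

lemma expectation_draws_fst:
  fixes h :: "nat \<Rightarrow> real"
  shows
  "i < n \<Longrightarrow> m \<ge> 1 \<Longrightarrow> measure_pmf.expectation (draws_pmf n m) (\<lambda>d. h (fst (d i))) = avg m h"
  using integral_map_pmf[of "\<lambda>d. fst (d i)" "draws_pmf n m" h]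
  by (simp add: map_draws_pmf_fst expectation_uniform)

lemma expectation_draws_snd:
  fixes h :: "nat \<Rightarrow> real"
  shows
  "i < n \<Longrightarrow> m \<ge> 1 \<Longrightarrow> measure_pmf.expectation (draws_pmf n m) (\<lambda>d. h (snd (d i))) = avg m h"
  using integral_map_pmf[of "\<lambda>d. snd (d i)" "draws_pmf n m" h]
  by (simp add: map_draws_pmf_snd expectation_uniform)

lemma expectation_draws_fst_fst:
  fixes h :: "nat \<Rightarrow> nat \<Rightarrow> real"
  assumes "i < n" "i' < n" "i \<noteq> i'" "m \<ge> 1"
  shows "measure_pmf.expectation (draws_pmf n m) (\<lambda>d. h (fst (d i)) (fst (d i')))
       = avg m (\<lambda>u. avg m (\<lambda>v. h u v))"
  using integral_map_pmf[of "\<lambda>d. (fst (d i), fst (d i'))" "draws_pmf n m" "\<lambda>q. h (fst q) (snd q)"] assms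
  by (simp add: map_draws_pmf_fst_fst expectation_uniform_pair)

lemma expectation_draws_fst_snd:
  fixes h :: "nat \<Rightarrow> nat \<Rightarrow> real"
  assumes "i < n" "i' < n" "m \<ge> 1"
  shows "measure_pmf.expectation (draws_pmf n m) (\<lambda>d. h (fst (d i')) (snd (d i)))
       = avg m (\<lambda>u. avg m (\<lambda>v. h u v))"
  using integral_map_pmf[of "\<lambda>d. (fst (d i'), snd (d i))" "draws_pmf n m" "\<lambda>q. h (fst q) (snd q)"] assms
  by (simp add: map_draws_pmf_fst_snd expectation_uniform_pair)

lemma saga_grad_eq:
  "saga_grad m Df (x, y, z, gp) d i
     = Df i (fst (d i)) (x i) - Df i (fst (d i)) (z i (fst (d i))) + avg m (\<lambda>j. Df i j (z i j))"
  by (simp add: saga_grad_def avg_def)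

lemma gt_step_eq:
  "gt_step n m W \<alpha> Df (x, y, z, gp) d =
    (let g = saga_grad m Df (x, y, z, gp) d;
         y' = (\<lambda>i. \<Sum>r<n. W i r *\<^sub>R (y r + g r - gp r))
     in ((\<lambda>i. \<Sum>r<n. W i r *\<^sub>R (x r - \<alpha> *\<^sub>R y' r)), y', (\<lambda>i j. if j = snd (d i) then x i else z i j), g))"
  by (simp add: gt_step_def Let_def)

lemma avg_tracker_eq_avg_grad:
  assumes "doubly_stochastic n W"
  shows "avg n (fst (snd (gt_saga n m W \<alpha> Df x0 \<omega> k))) = avg n (snd (snd (snd (gt_saga n m W \<alpha> Df x0 \<omega> k))))"
proof (induction k)
  case 0
  then show ?case by simp
next
  case (Suc k)
  obtain x y z gp where st: "gt_saga n m W \<alpha> Df x0 \<omega> k = (x, y, z, gp)"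
    by (cases "gt_saga n m W \<alpha> Df x0 \<omega> k") auto
  with Suc.IH have "avg n y = avg n gp" by simp
  then show ?case
    unfolding gt_saga.simps st gt_step_eq Let_def
    by (simp add: avg_doubly_stochastic_mix[OF assms] avg_add avg_diff)
qed

lemma avg_st_x_gt_step:
  assumes "doubly_stochastic n W" "avg n y = avg n gp"
  shows "avg n (st_x (gt_step n m W \<alpha> Df (x, y, z, gp) d))
       = avg n x - \<alpha> *\<^sub>R avg n (saga_grad m Df (x, y, z, gp) d)"
  unfolding st_x_def gt_step_eq Let_def
  using assms by (simp add: avg_doubly_stochastic_mix avg_add avg_diff avg_scale)

lemma st_z_gt_step:
  "st_z (gt_step n m W \<alpha> Df (x, y, z, gp) d) = (\<lambda>i j. if j = snd (d i) then x i else z i j)"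
  unfolding st_z_def gt_step_eq Let_def by simp

lemma gt_saga_cong_prefix:
  "(\<And>t. t < k \<Longrightarrow> \<omega> t = \<omega>' t) \<Longrightarrow> gt_saga n m W \<alpha> Df x0 \<omega> k = gt_saga n m W \<alpha> Df x0 \<omega>' k"
  by (induction k) auto

lemma t_gap_eq_avg:
  "t_gap n m st = avg n (\<lambda>i. avg m (\<lambda>j. (norm (avg n (st_x st) - st_z st i j))\<^sup>2))"
  by (simp add: t_gap_def avg_def)

lemma t_gap_nonneg: "0 \<le> t_gap n m st"
  unfolding t_gap_eq_avg by (intro avg_nonneg) simp

section \<open>The expected gap after one round\<close>

lemma expectation_draws_avg:
  fixes f :: "nat \<Rightarrow> draws \<Rightarrow> real"
  assumes "m \<ge> 1"
  shows "measure_pmf.expectation (draws_pmf n' m) (\<lambda>d. avg n (\<lambda>i. f i d))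
       = avg n (\<lambda>i. measure_pmf.expectation (draws_pmf n' m) (f i))"
  unfolding avg_def using integrable_draws_pmf[OF assms]
  by (simp add: Bochner_Integration.integral_sum)

lemma expectation_sq_dist_resampled:
  fixes a p q :: "'a::real_inner"
  assumes "m \<ge> 1" "i < n" "j < m"
  shows "measure_pmf.expectation (draws_pmf n m) (\<lambda>d. (norm (a - (if j = snd (d i) then p else q)))\<^sup>2)
       = (norm (a - p))\<^sup>2 / real m + (1 - 1 / real m) * (norm (a - q))\<^sup>2"
proof -
  let ?h = "\<lambda>b. if j = b then (norm (a - p))\<^sup>2 else (norm (a - q))\<^sup>2"
  have eq: "(\<lambda>d. (norm (a - (if j = snd (d i) then p else q)))\<^sup>2) = (\<lambda>d. ?h (snd (d i)))"
    by auto
  show ?thesis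
    unfolding eq using expectation_draws_snd[of i n m ?h] assms by (simp add: avg_if_eq)
qed

lemma expectation_inner_resampled_noise:
  fixes A \<xi> :: "nat \<Rightarrow> 'a::real_inner"
  assumes "m \<ge> 1" "i < n" "i' < n" "avg m \<xi> = 0"
  shows "measure_pmf.expectation (draws_pmf n m) (\<lambda>d. inner (A (snd (d i))) (\<xi> (fst (d i')))) = 0"
  using expectation_draws_fst_snd[of i n i' m "\<lambda>u v. inner (A v) (\<xi> u)"] assms
  by (simp add: avg_inner_left avg_inner_right)

lemma expectation_inner_noise:
  fixes \<xi> :: "nat \<Rightarrow> nat \<Rightarrow> 'a::real_inner"
  assumes "m \<ge> 1" "i < n" "i' < n" "avg m (\<xi> i') = 0"
  shows "measure_pmf.expectation (draws_pmf n m) (\<lambda>d. inner (\<xi> i (fst (d i))) (\<xi> i' (fst (d i'))))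
       = (if i = i' then avg m (\<lambda>t. (norm (\<xi> i t))\<^sup>2) else 0)"
proof (cases "i = i'")
  case True
  then show ?thesis
    using expectation_draws_fst[of i n m "\<lambda>t. (norm (\<xi> i t))\<^sup>2"] assms
    by (simp add: power2_norm_eq_inner)
next
  case False
  then show ?thesis
    using expectation_draws_fst_fst[of i n i' m "\<lambda>u v. inner (\<xi> i u) (\<xi> i' v)"] assms
    by (simp add: avg_inner_left avg_inner_right)
qed

lemma expectation_sq_norm_noise:
  fixes \<xi> :: "nat \<Rightarrow> nat \<Rightarrow> 'a::real_inner"
  assumes "m \<ge> 1" and centered: "\<And>i. i < n \<Longrightarrow> avg m (\<xi> i) = 0"
  shows "measure_pmf.expectation (draws_pmf n m) (\<lambda>d. (norm (avg n (\<lambda>i. \<xi> i (fst (d i)))))\<^sup>2)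
       = avg n (\<lambda>i. avg m (\<lambda>t. (norm (\<xi> i t))\<^sup>2)) / real n"
proof -
  have eq: "(\<lambda>d. (norm (avg n (\<lambda>i. \<xi> i (fst (d i)))))\<^sup>2)
      = (\<lambda>d. avg n (\<lambda>i. avg n (\<lambda>i'. inner (\<xi> i (fst (d i))) (\<xi> i' (fst (d i'))))))"
    by (simp add: power2_norm_eq_inner avg_inner_left avg_inner_right)
  have "measure_pmf.expectation (draws_pmf n m) (\<lambda>d. (norm (avg n (\<lambda>i. \<xi> i (fst (d i)))))\<^sup>2)
      = avg n (\<lambda>i. avg n (\<lambda>i'. if i = i' then avg m (\<lambda>t. (norm (\<xi> i t))\<^sup>2) else 0))"
    unfolding eq using assms
    by (simp add: expectation_draws_avg expectation_inner_noise cong: avg_cong_lessThan)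
  also have "\<dots> = avg n (\<lambda>i. avg m (\<lambda>t. (norm (\<xi> i t))\<^sup>2) / real n)"
    by (intro avg_cong_lessThan) (simp add: avg_if_eq_zero)
  finally show ?thesis by (simp add: avg_def sum_divide_distrib)
qed

lemma expectation_avg_sq_dist_after_step:
  fixes a :: "'a::real_inner" and x :: "nat \<Rightarrow> 'a" and z \<xi> :: "nat \<Rightarrow> nat \<Rightarrow> 'a"
  assumes n: "n \<ge> 1" and m: "m \<ge> 1" and centered: "\<And>i. i < n \<Longrightarrow> avg m (\<xi> i) = 0"
  shows "measure_pmf.expectation (draws_pmf n m)
      (\<lambda>d. avg n (\<lambda>i. avg m (\<lambda>j. (norm ((a - (if j = snd (d i) then x i else z i j))
                                       - \<alpha> *\<^sub>R avg n (\<lambda>i'. \<xi> i' (fst (d i')))))\<^sup>2)))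
    = avg n (\<lambda>i. (norm (a - x i))\<^sup>2) / real m
      + (1 - 1 / real m) * avg n (\<lambda>i. avg m (\<lambda>j. (norm (a - z i j))\<^sup>2))
      + \<alpha>\<^sup>2 / real n * avg n (\<lambda>i. avg m (\<lambda>t. (norm (\<xi> i t))\<^sup>2))"
proof -
  let ?E = "measure_pmf.expectation (draws_pmf n m)"
  define V where "V = avg n (\<lambda>i. avg m (\<lambda>t. (norm (\<xi> i t))\<^sup>2))"
  define N where "N d = avg n (\<lambda>i'. \<xi> i' (fst (d i')))" for d :: draws
  define A where "A i j b = a - (if j = b then x i else z i j)" for i j b
  have int: "integrable (measure_pmf (draws_pmf n m)) f" for f :: "draws \<Rightarrow> real"
    using m by (rule integrable_draws_pmf)
  have expand: "(norm (A i j (snd (d i)) - \<alpha> *\<^sub>R N d))\<^sup>2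
      = (norm (A i j (snd (d i))))\<^sup>2 - 2 * \<alpha> * avg n (\<lambda>i'. inner (A i j (snd (d i))) (\<xi> i' (fst (d i'))))
        + \<alpha>\<^sup>2 * (norm (N d))\<^sup>2" for i j d
    unfolding norm_diff_scaleR_sq N_def avg_inner_right ..
  have cross: "?E (\<lambda>d. avg n (\<lambda>i'. inner (A i j (snd (d i))) (\<xi> i' (fst (d i'))))) = 0" if "i < n" for i j
    using that m centered
    by (simp add: expectation_draws_avg expectation_inner_resampled_noise cong: avg_cong_lessThan)
  have noise: "?E (\<lambda>d. (norm (N d))\<^sup>2) = V / real n"
    unfolding N_def V_def using m centered by (rule expectation_sq_norm_noise)
  have node: "?E (\<lambda>d. (norm (A i j (snd (d i)) - \<alpha> *\<^sub>R N d))\<^sup>2)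
      = (norm (a - x i))\<^sup>2 / real m + (1 - 1 / real m) * (norm (a - z i j))\<^sup>2 + \<alpha>\<^sup>2 * (V / real n)"
    if "i < n" "j < m" for i j
    unfolding expand using that m cross[OF \<open>i < n\<close>, of j] noise
    by (simp add: int A_def expectation_sq_dist_resampled)
  have "?E (\<lambda>d. avg n (\<lambda>i. avg m (\<lambda>j. (norm (A i j (snd (d i)) - \<alpha> *\<^sub>R N d))\<^sup>2)))
      = avg n (\<lambda>i. avg m (\<lambda>j. (norm (a - x i))\<^sup>2 / real m + (1 - 1 / real m) * (norm (a - z i j))\<^sup>2
                                + \<alpha>\<^sup>2 * (V / real n)))"
    using m by (simp add: expectation_draws_avg node cong: avg_cong_lessThan)
  also have "\<dots> = avg n (\<lambda>i. (norm (a - x i))\<^sup>2) / real m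
      + (1 - 1 / real m) * avg n (\<lambda>i. avg m (\<lambda>j. (norm (a - z i j))\<^sup>2)) + \<alpha>\<^sup>2 / real n * V"
    using n m by (simp add: avg_add avg_mult avg_const divide_inverse mult.commute)
  finally show ?thesis
    unfolding A_def N_def V_def .
qed

lemma avg_sq_dist_shifted_mean:
  fixes x :: "nat \<Rightarrow> 'a::real_inner"
  assumes "n \<ge> 1"
  shows "avg n (\<lambda>i. (norm ((avg n x - c *\<^sub>R g) - x i))\<^sup>2)
       = avg n (\<lambda>i. (norm (x i - avg n x))\<^sup>2) + c\<^sup>2 * (norm g)\<^sup>2"
proof -
  have "(norm ((avg n x - c *\<^sub>R g) - x i))\<^sup>2
      = (norm (x i - avg n x))\<^sup>2 - 2 * c * inner (avg n x - x i) g + c\<^sup>2 * (norm g)\<^sup>2" for i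
    using norm_diff_scaleR_sq[of "avg n x - x i" c g]
    by (simp add: algebra_simps norm_minus_commute)
  then have "avg n (\<lambda>i. (norm ((avg n x - c *\<^sub>R g) - x i))\<^sup>2)
      = avg n (\<lambda>i. (norm (x i - avg n x))\<^sup>2 - 2 * c * inner (avg n x - x i) g + c\<^sup>2 * (norm g)\<^sup>2)"
    by simp
  also have "\<dots> = avg n (\<lambda>i. (norm (x i - avg n x))\<^sup>2) + c\<^sup>2 * (norm g)\<^sup>2"
    using assms by (simp only: avg_add avg_diff avg_mult avg_const avg_inner_left avg_centered) simp
  finally show ?thesis .
qed

lemma avg_sq_dist_shifted_point:
  fixes z :: "nat \<Rightarrow> nat \<Rightarrow> 'a::real_inner"
  assumes "n \<ge> 1" "m \<ge> 1"
  shows "avg n (\<lambda>i. avg m (\<lambda>j. (norm ((p - c *\<^sub>R g) - z i j))\<^sup>2))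
       = avg n (\<lambda>i. avg m (\<lambda>j. (norm (p - z i j))\<^sup>2))
         - 2 * c * inner (avg n (\<lambda>i. avg m (\<lambda>j. p - z i j))) g + c\<^sup>2 * (norm g)\<^sup>2"
proof -
  have "(norm ((p - c *\<^sub>R g) - z i j))\<^sup>2
      = (norm (p - z i j))\<^sup>2 - 2 * c * inner (p - z i j) g + c\<^sup>2 * (norm g)\<^sup>2" for i j
    using norm_diff_scaleR_sq[of "p - z i j" c g] by (simp add: algebra_simps)
  then have "avg n (\<lambda>i. avg m (\<lambda>j. (norm ((p - c *\<^sub>R g) - z i j))\<^sup>2))
      = avg n (\<lambda>i. avg m (\<lambda>j. (norm (p - z i j))\<^sup>2 - 2 * c * inner (p - z i j) g + c\<^sup>2 * (norm g)\<^sup>2))"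
    by simp
  also have "\<dots> = avg n (\<lambda>i. avg m (\<lambda>j. (norm (p - z i j))\<^sup>2))
         - 2 * c * inner (avg n (\<lambda>i. avg m (\<lambda>j. p - z i j))) g + c\<^sup>2 * (norm g)\<^sup>2"
    using assms by (simp only: avg_add avg_diff avg_mult avg_const avg_inner_left)
  finally show ?thesis .
qed

lemma norm_avg_avg_sq_le:
  fixes v :: "nat \<Rightarrow> nat \<Rightarrow> 'a::real_inner"
  assumes "n \<ge> 1" "m \<ge> 1"
  shows "(norm (avg n (\<lambda>i. avg m (v i))))\<^sup>2 \<le> avg n (\<lambda>i. avg m (\<lambda>j. (norm (v i j))\<^sup>2))"
proof -
  have "(norm (avg n (\<lambda>i. avg m (v i))))\<^sup>2 \<le> avg n (\<lambda>i. (norm (avg m (v i)))\<^sup>2)"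
    by (rule norm_avg_sq_le[OF assms(1)])
  also have "\<dots> \<le> avg n (\<lambda>i. avg m (\<lambda>j. (norm (v i j))\<^sup>2))"
    by (intro avg_mono norm_avg_sq_le assms(2))
  finally show ?thesis .
qed

lemma avg_sq_dist_le_via_point:
  fixes x :: "nat \<Rightarrow> 'a::real_inner" and z :: "nat \<Rightarrow> nat \<Rightarrow> 'a"
  assumes "m \<ge> 1"
  shows "avg n (\<lambda>i. avg m (\<lambda>t. (norm (x i - z i t))\<^sup>2))
       \<le> 2 * avg n (\<lambda>i. (norm (x i - p))\<^sup>2) + 2 * avg n (\<lambda>i. avg m (\<lambda>t. (norm (p - z i t))\<^sup>2))"
proof -
  have node: "avg m (\<lambda>t. (norm (x i - z i t))\<^sup>2)
      \<le> 2 * (norm (x i - p))\<^sup>2 + 2 * avg m (\<lambda>t. (norm (p - z i t))\<^sup>2)" for i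
  proof -
    have "avg m (\<lambda>t. (norm (x i - z i t))\<^sup>2)
        \<le> avg m (\<lambda>t. 2 * (norm (x i - p))\<^sup>2 + 2 * (norm (p - z i t))\<^sup>2)"
      using norm_sq_add_le[of "x i - p" "p - z i _"] by (intro avg_mono) simp
    also have "\<dots> = 2 * (norm (x i - p))\<^sup>2 + 2 * avg m (\<lambda>t. (norm (p - z i t))\<^sup>2)"
      using assms by (simp add: avg_add avg_mult avg_const)
    finally show ?thesis .
  qed
  have "avg n (\<lambda>i. avg m (\<lambda>t. (norm (x i - z i t))\<^sup>2))
      \<le> avg n (\<lambda>i. 2 * (norm (x i - p))\<^sup>2 + 2 * avg m (\<lambda>t. (norm (p - z i t))\<^sup>2))"
    using node by (intro avg_mono)
  then show ?thesis
    by (simp add: avg_add avg_mult)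
qed

text \<open>The argument gives the coefficients alpha^2 and 1/m where the statement has 2 alpha^2 and 2/m.\<close>

lemma gap_recursion_arith:
  fixes T C \<Gamma> V ip \<alpha> \<beta> L :: real and n m :: nat
  assumes "m \<ge> 1" "0 \<le> T" "0 \<le> C" "0 \<le> \<Gamma>"
    and cross: "(1 - 1 / real m) * (- (2 * \<alpha> * ip)) \<le> \<alpha> * \<beta> * T + \<alpha> / \<beta> * \<Gamma>"
    and variance: "\<alpha>\<^sup>2 / real n * V \<le> 2 * \<alpha>\<^sup>2 * L\<^sup>2 / real n * C + 2 * \<alpha>\<^sup>2 * L\<^sup>2 / real n * T"
  shows "(C + \<alpha>\<^sup>2 * \<Gamma>) / real m + (1 - 1 / real m) * (T - 2 * \<alpha> * ip + \<alpha>\<^sup>2 * \<Gamma>) + \<alpha>\<^sup>2 / real n * V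
       \<le> (1 - 1 / real m + \<alpha> * \<beta> + 2 * \<alpha>\<^sup>2 * L\<^sup>2 / real n) * T + (2 * \<alpha>\<^sup>2 + \<alpha> / \<beta>) * \<Gamma>
         + (2 * \<alpha>\<^sup>2 * L\<^sup>2 / real n + 2 / real m) * C"
proof -
  have "(C + \<alpha>\<^sup>2 * \<Gamma>) / real m + (1 - 1 / real m) * (T - 2 * \<alpha> * ip + \<alpha>\<^sup>2 * \<Gamma>)
      = C / real m + \<alpha>\<^sup>2 * \<Gamma> + (1 - 1 / real m) * T + (1 - 1 / real m) * (- (2 * \<alpha> * ip))"
    by (simp add: algebra_simps add_divide_distrib)
  moreover have "C / real m \<le> 2 / real m * C" "\<alpha>\<^sup>2 * \<Gamma> \<le> 2 * \<alpha>\<^sup>2 * \<Gamma>"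
    using assms(1-4) by (simp_all add: divide_right_mono)
  ultimately show ?thesis
    using cross variance by (simp add: algebra_simps)
qed

lemma young_cross_term_le:
  fixes w g :: "'a::real_inner"
  assumes m: "m \<ge> 1" and \<alpha>: "\<alpha> > 0" and \<beta>: "\<beta> > 0" and w: "(norm w)\<^sup>2 \<le> T"
  shows "(1 - 1 / real m) * - (2 * \<alpha> * inner w g) \<le> \<alpha> * \<beta> * T + \<alpha> / \<beta> * (norm g)\<^sup>2"
proof -
  have "- inner w g \<le> norm w * norm g"
    using Cauchy_Schwarz_ineq2[of w g] by linarith
  then have "- (2 * \<alpha> * inner w g) \<le> 2 * \<alpha> * (norm w * norm g)"
    using mult_left_mono[of _ _ "2 * \<alpha>"] \<alpha> by fastforce
  then have "(1 - 1 / real m) * - (2 * \<alpha> * inner w g) \<le> (1 - 1 / real m) * (2 * \<alpha> * (norm w * norm g))"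
    by (rule mult_left_mono) (use m in simp)
  also have "\<dots> \<le> \<alpha> * (2 * norm w * norm g)"
    using \<alpha> m mult_left_le_one_le[of "2 * \<alpha> * (norm w * norm g)" "1 - 1 / real m"] by simp
  also have "\<dots> \<le> \<alpha> * (\<beta> * (norm w)\<^sup>2 + (norm g)\<^sup>2 / \<beta>)"
    using \<alpha> two_mult_le_weighted_squares[OF \<beta>] by (intro mult_left_mono) auto
  also have "\<dots> \<le> \<alpha> * (\<beta> * T + (norm g)\<^sup>2 / \<beta>)"
    using \<alpha> \<beta> w by (intro mult_left_mono add_right_mono) auto
  finally show ?thesis
    by (simp add: algebra_simps)
qed

lemma avg_sq_norm_saga_error_le:
  fixes Df :: "nat \<Rightarrow> nat \<Rightarrow> 'a::real_inner \<Rightarrow> 'a" and x :: "nat \<Rightarrow> 'a" and z :: "nat \<Rightarrow> nat \<Rightarrow> 'a"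
  assumes m: "m \<ge> 1"
    and smooth: "\<And>i j x y. i < n \<Longrightarrow> j < m \<Longrightarrow> norm (Df i j x - Df i j y) \<le> L * norm (x - y)"
  defines "\<delta> \<equiv> \<lambda>i t. Df i t (x i) - Df i t (z i t)"
  shows "avg n (\<lambda>i. avg m (\<lambda>t. (norm (\<delta> i t - avg m (\<delta> i)))\<^sup>2))
       \<le> L\<^sup>2 * (2 * avg n (\<lambda>i. (norm (x i - p))\<^sup>2) + 2 * avg n (\<lambda>i. avg m (\<lambda>t. (norm (p - z i t))\<^sup>2)))"
proof -
  have lipschitz: "(norm (\<delta> i t))\<^sup>2 \<le> L\<^sup>2 * (norm (x i - z i t))\<^sup>2" if "i < n" "t < m" for i t
    using power_mono[OF smooth[OF that, of "x i" "z i t"], of 2]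
    by (simp add: \<delta>_def power_mult_distrib)
  have "avg n (\<lambda>i. avg m (\<lambda>t. (norm (\<delta> i t - avg m (\<delta> i)))\<^sup>2))
      \<le> avg n (\<lambda>i. avg m (\<lambda>t. (norm (\<delta> i t))\<^sup>2))"
    by (intro avg_mono avg_sq_norm_centered_le m)
  also have "\<dots> \<le> avg n (\<lambda>i. avg m (\<lambda>t. L\<^sup>2 * (norm (x i - z i t))\<^sup>2))"
    using lipschitz by (intro avg_mono)
  also have "\<dots> = L\<^sup>2 * avg n (\<lambda>i. avg m (\<lambda>t. (norm (x i - z i t))\<^sup>2))"
    by (simp add: avg_mult)
  also have "\<dots> \<le> L\<^sup>2 * (2 * avg n (\<lambda>i. (norm (x i - p))\<^sup>2) + 2 * avg n (\<lambda>i. avg m (\<lambda>t. (norm (p - z i t))\<^sup>2)))"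
    using avg_sq_dist_le_via_point[OF m, of n x z p] by (intro mult_left_mono) auto
  finally show ?thesis .
qed

lemma expectation_t_gap_gt_step_le:
  fixes Df :: "nat \<Rightarrow> nat \<Rightarrow> 'a::euclidean_space \<Rightarrow> 'a"
  assumes n: "n \<ge> 1" and m: "m \<ge> 1" and \<alpha>: "\<alpha> > 0" and \<beta>: "\<beta> > 0"
    and smooth: "\<And>i j x y. i < n \<Longrightarrow> j < m \<Longrightarrow> norm (Df i j x - Df i j y) \<le> L * norm (x - y)"
    and W: "doubly_stochastic n W" and tracking: "avg n y = avg n gp"
  shows "measure_pmf.expectation (draws_pmf n m) (\<lambda>d. t_gap n m (gt_step n m W \<alpha> Df (x, y, z, gp) d))
    \<le> (1 - 1 / real m + \<alpha> * \<beta> + 2 * \<alpha>\<^sup>2 * L\<^sup>2 / real n) * t_gap n m (x, y, z, gp)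
      + (2 * \<alpha>\<^sup>2 + \<alpha> / \<beta>) * avg_grad_sq n m Df (x, y, z, gp)
      + (2 * \<alpha>\<^sup>2 * L\<^sup>2 / real n + 2 / real m) * (1 / real n) * consensus_err n (x, y, z, gp)"
proof -
  define xb where "xb = avg n x"
  define g where "g = avg n (\<lambda>i. avg m (\<lambda>j. Df i j (x i)))"
  define \<delta> where "\<delta> i t = Df i t (x i) - Df i t (z i t)" for i t
  define \<xi> where "\<xi> i t = \<delta> i t - avg m (\<delta> i)" for i t
  define T where "T = avg n (\<lambda>i. avg m (\<lambda>j. (norm (xb - z i j))\<^sup>2))"
  define C where "C = avg n (\<lambda>i. (norm (x i - xb))\<^sup>2)"
  define V where "V = avg n (\<lambda>i. avg m (\<lambda>t. (norm (\<xi> i t))\<^sup>2))"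
  define w where "w = avg n (\<lambda>i. avg m (\<lambda>j. xb - z i j))"
  have centered: "avg m (\<xi> i) = 0" for i
    unfolding \<xi>_def using m by (simp add: avg_diff avg_const)
  have saga: "saga_grad m Df (x, y, z, gp) d = (\<lambda>i. avg m (\<lambda>j. Df i j (x i)) + \<xi> i (fst (d i)))" for d
    unfolding saga_grad_eq \<xi>_def \<delta>_def by (simp add: avg_diff fun_eq_iff)
  have next_gap: "t_gap n m (gt_step n m W \<alpha> Df (x, y, z, gp) d)
      = avg n (\<lambda>i. avg m (\<lambda>j. (norm (((xb - \<alpha> *\<^sub>R g) - (if j = snd (d i) then x i else z i j))
                                    - \<alpha> *\<^sub>R avg n (\<lambda>i'. \<xi> i' (fst (d i')))))\<^sup>2))" for d
    unfolding t_gap_eq_avg avg_st_x_gt_step[OF W tracking] st_z_gt_step saga avg_add xb_def g_def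
    by (simp add: algebra_simps)
  have "measure_pmf.expectation (draws_pmf n m) (\<lambda>d. t_gap n m (gt_step n m W \<alpha> Df (x, y, z, gp) d))
      = avg n (\<lambda>i. (norm ((xb - \<alpha> *\<^sub>R g) - x i))\<^sup>2) / real m
        + (1 - 1 / real m) * avg n (\<lambda>i. avg m (\<lambda>j. (norm ((xb - \<alpha> *\<^sub>R g) - z i j))\<^sup>2))
        + \<alpha>\<^sup>2 / real n * V"
    unfolding next_gap V_def using n m centered by (rule expectation_avg_sq_dist_after_step)
  also have "\<dots> = (C + \<alpha>\<^sup>2 * (norm g)\<^sup>2) / real m
        + (1 - 1 / real m) * (T - 2 * \<alpha> * inner w g + \<alpha>\<^sup>2 * (norm g)\<^sup>2) + \<alpha>\<^sup>2 / real n * V"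
    unfolding C_def T_def w_def xb_def
    using n m by (simp add: avg_sq_dist_shifted_mean avg_sq_dist_shifted_point)
  also have "\<dots> \<le> (1 - 1 / real m + \<alpha> * \<beta> + 2 * \<alpha>\<^sup>2 * L\<^sup>2 / real n) * T
        + (2 * \<alpha>\<^sup>2 + \<alpha> / \<beta>) * (norm g)\<^sup>2 + (2 * \<alpha>\<^sup>2 * L\<^sup>2 / real n + 2 / real m) * C"
  proof (rule gap_recursion_arith[OF m])
    show "0 \<le> T" "0 \<le> C"
      unfolding T_def C_def by (auto intro!: avg_nonneg)
    show "(1 - 1 / real m) * - (2 * \<alpha> * inner w g) \<le> \<alpha> * \<beta> * T + \<alpha> / \<beta> * (norm g)\<^sup>2"
      unfolding w_def T_def using n m \<alpha> \<beta> by (intro young_cross_term_le norm_avg_avg_sq_le)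
    have "V \<le> L\<^sup>2 * (2 * C + 2 * T)"
      unfolding V_def \<xi>_def \<delta>_def C_def T_def using m smooth by (rule avg_sq_norm_saga_error_le)
    then have "\<alpha>\<^sup>2 / real n * V \<le> \<alpha>\<^sup>2 / real n * (L\<^sup>2 * (2 * C + 2 * T))"
      by (intro mult_left_mono) auto
    then show "\<alpha>\<^sup>2 / real n * V \<le> 2 * \<alpha>\<^sup>2 * L\<^sup>2 / real n * C + 2 * \<alpha>\<^sup>2 * L\<^sup>2 / real n * T"
      by (simp add: algebra_simps)
  qed simp
  also have "\<dots> = (1 - 1 / real m + \<alpha> * \<beta> + 2 * \<alpha>\<^sup>2 * L\<^sup>2 / real n) * t_gap n m (x, y, z, gp)
      + (2 * \<alpha>\<^sup>2 + \<alpha> / \<beta>) * avg_grad_sq n m Df (x, y, z, gp)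
      + (2 * \<alpha>\<^sup>2 * L\<^sup>2 / real n + 2 / real m) * (1 / real n) * consensus_err n (x, y, z, gp)"
    by (simp add: T_def C_def g_def xb_def t_gap_eq_avg avg_grad_sq_def consensus_err_def st_x_def st_z_def
        avg_def)
  finally show ?thesis .
qed

theorem lemma5:
  fixes n m :: nat and L \<alpha> \<beta> :: real
    and f :: "nat \<Rightarrow> nat \<Rightarrow> 'a::euclidean_space \<Rightarrow> real"
    and Df :: "nat \<Rightarrow> nat \<Rightarrow> 'a \<Rightarrow> 'a"
    and W :: "nat \<Rightarrow> nat \<Rightarrow> real" and x0 :: 'a and k :: nat
  assumes n: "n \<ge> 1" and m: "m \<ge> 1" and L: "L > 0"
    and grad: "\<And>i j x. i < n \<Longrightarrow> j < m \<Longrightarrow> GDERIV (f i j) x :> Df i j x"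
    and smooth: "\<And>i j x y. i < n \<Longrightarrow> j < m \<Longrightarrow> norm (Df i j x - Df i j y) \<le> L * norm (x - y)"
    and bdd: "bdd_below (range (\<lambda>x. (1 / real n) * (\<Sum>i<n. (1 / real m) * (\<Sum>j<m. f i j x))))"
    and W: "doubly_stochastic n W" "primitive_mat n W"
    and \<alpha>: "\<alpha> > 0" and \<beta>: "\<beta> > 0"
  defines "\<theta> \<equiv> 1 - 1 / real m + \<alpha> * \<beta> + 2 * \<alpha>\<^sup>2 * L\<^sup>2 / real n"
  shows "AE \<omega> in run_space n m.
           real_cond_exp (run_space n m) (filt n m k)
             (\<lambda>\<omega>. t_gap n m (gt_saga n m W \<alpha> Df x0 \<omega> (Suc k))) \<omega>
         \<le> \<theta> * t_gap n m (gt_saga n m W \<alpha> Df x0 \<omega> k)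
           + (2 * \<alpha>\<^sup>2 + \<alpha> / \<beta>) * avg_grad_sq n m Df (gt_saga n m W \<alpha> Df x0 \<omega> k)
           + (2 * \<alpha>\<^sup>2 * L\<^sup>2 / real n + 2 / real m) * (1 / real n)
               * consensus_err n (gt_saga n m W \<alpha> Df x0 \<omega> k)"
proof -
  define S where "S \<omega> = gt_saga n m W \<alpha> Df x0 \<omega> k" for \<omega>
  define \<phi> where "\<phi> u d = t_gap n m (gt_step n m W \<alpha> Df (S u) d)" for u d
  define R where "R st = \<theta> * t_gap n m st + (2 * \<alpha>\<^sup>2 + \<alpha> / \<beta>) * avg_grad_sq n m Df st
    + (2 * \<alpha>\<^sup>2 * L\<^sup>2 / real n + 2 / real m) * (1 / real n) * consensus_err n st" for st
  have S_restrict: "S (restrict \<omega> {..<k}) = S \<omega>" for \<omega>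
    unfolding S_def by (rule gt_saga_cong_prefix) simp
  have next_gap: "t_gap n m (gt_saga n m W \<alpha> Df x0 \<omega> (Suc k)) = \<phi> (restrict \<omega> {..<k}) (\<omega> k)" for \<omega>
    unfolding \<phi>_def S_restrict by (simp add: S_def)
  have cond: "AE \<omega> in run_space n m. real_cond_exp (run_space n m) (filt n m k) (\<lambda>\<omega>. \<phi> (restrict \<omega> {..<k}) (\<omega> k)) \<omega>
      = enn2real (\<integral>\<^sup>+ d. ennreal (\<phi> (restrict \<omega> {..<k}) d) \<partial>draw_space n m)"
    unfolding run_space_def filt_def
    by (rule real_cond_exp_PiM_next_coordinate[OF prob_space_draw_space countable_discrete_draw_space])
      (simp add: \<phi>_def t_gap_nonneg)
  have bound: "enn2real (\<integral>\<^sup>+ d. ennreal (\<phi> u d) \<partial>draw_space n m) \<le> R (S u)" for u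
  proof -
    obtain x y z gp where st: "S u = (x, y, z, gp)"
      by (cases "S u") auto
    have "avg n y = avg n gp"
      using avg_tracker_eq_avg_grad[OF W(1), of m \<alpha> Df x0 u k] st by (simp add: S_def)
    then show ?thesis
      unfolding \<phi>_def st R_def \<theta>_def
      using expectation_t_gap_gt_step_le[OF n m \<alpha> \<beta> smooth W(1)]
      by (simp add: nn_integral_draw_space[OF m] t_gap_nonneg integral_nonneg_AE)
  qed
  from cond show ?thesis
    unfolding next_gap
    by (rule eventually_mono) (metis R_def S_def S_restrict bound)
qed

end
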